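(* Let $n\ge 1$, let $c\in\mathbb{R}^n$ with $c_1\ge c_2\ge\cdots\ge c_n\ge 0$, and let $u\in\mathbb{R}^n$ with $u_i>0$ for all $i$. Let $f(x)=\frac12\left(\sum_{i=1}^n x_i\right)^2-\sum_{i=1}^n c_ix_i$. For $k=0,1,\dots,n$ let $U_k=\sum_{i=1}^k u_i$ (so $U_0=0$) and let $x^{(k)}\in\mathbb{R}^n$ be the vector with $x^{(k)}_i=u_i$ for $i\le k$ and $x^{(k)}_i=0$ for $i>k$ (so $x^{(0)}=0$). For $k=1,\dots,n$ let \[ G_k=\tfrac12\left(U_k+U_{k-1}\right)-c_k=U_{k-1}+\tfrac12u_k-c_k . \] Then: (i) If $\bar n$ is the smallest index in $\{1,\dots,n\}$ such that $G_{\bar n}\ge 0$, then $\min_{i=0,1,\dots,n} f(x^{(i)})=f(x^{(\bar n-1)})$. (ii) If $G_k<0$ for all $k=1,\dots,n$, then $\min_{i=0,1,\dots,n} f(x^{(i)})=f(x^{(n)})$.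
   Context: The vectors $x^{(k)}$ fill the coordinates $1,\dots,k$ to their upper bounds $u_i$ and leave the rest at $0$. *)

theory Defs
  imports Complex_Main
begin

text \<open>Vectors in R^n are represented as functions nat => real, indexed by 1..n.\<close>

definition fobj :: "nat \<Rightarrow> (nat \<Rightarrow> real) \<Rightarrow> (nat \<Rightarrow> real) \<Rightarrow> real" where
  "fobj n c x = (1/2) * (\<Sum>i=1..n. x i)^2 - (\<Sum>i=1..n. c i * x i)"

definition xvec :: "(nat \<Rightarrow> real) \<Rightarrow> nat \<Rightarrow> (nat \<Rightarrow> real)" where
  "xvec u k = (\<lambda>i. if i \<le> k then u i else 0)"

definition Usum :: "(nat \<Rightarrow> real) \<Rightarrow> nat \<Rightarrow> real" where
  "Usum u k = (\<Sum>i=1..k. u i)"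

definition Gval :: "(nat \<Rightarrow> real) \<Rightarrow> (nat \<Rightarrow> real) \<Rightarrow> nat \<Rightarrow> real" where
  "Gval c u k = (1/2) * (Usum u k + Usum u (k - 1)) - c k"

end

theory Submission
  imports Defs
begin

text \<open>Filling coordinate k changes the objective by f(x^(k)) - f(x^(k-1)) = u_k G_k, and G is
  nondecreasing because u > 0 and c is nonincreasing. So k \<mapsto> f(x^(k)) decreases while G_k < 0
  and increases from the first index with G_k \<ge> 0 on: its minimum is at the bottom of this valley.\<close>

lemma antimono_steps_le:
  fixes F :: "nat \<Rightarrow> 'a::preorder"
  assumes "a \<le> b" and "\<And>m. a \<le> m \<Longrightarrow> m < b \<Longrightarrow> F (Suc m) \<le> F m"
  shows "F b \<le> F a"
  using assms(1)
proof (induction b rule: dec_induct)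
  case (step m)
  then show ?case using assms(2) order_trans by blast
qed simp

lemma mono_steps_le:
  fixes F :: "nat \<Rightarrow> 'a::preorder"
  assumes "a \<le> b" and "\<And>m. a \<le> m \<Longrightarrow> m < b \<Longrightarrow> F m \<le> F (Suc m)"
  shows "F a \<le> F b"
  using assms(1)
proof (induction b rule: dec_induct)
  case (step m)
  then show ?case using assms(2) order_trans by blast
qed simp

lemma Min_image_valley:
  fixes F :: "nat \<Rightarrow> 'a::linorder"
  assumes "p \<le> n"
    and down: "\<And>m. m < p \<Longrightarrow> F (Suc m) \<le> F m"
    and up: "\<And>m. p \<le> m \<Longrightarrow> m < n \<Longrightarrow> F m \<le> F (Suc m)"
  shows "Min (F ` {0..n}) = F p"
proof (rule Min_eqI)
  fix y assume "y \<in> F ` {0..n}"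
  then obtain k where "k \<le> n" "y = F k" by auto
  moreover have "F p \<le> F k"
  proof (cases "k \<le> p")
    case True
    then show ?thesis using down by (rule antimono_steps_le) simp
  next
    case False
    then show ?thesis using up \<open>k \<le> n\<close> by (auto intro!: mono_steps_le[of p k F])
  qed
  ultimately show "F p \<le> y" by simp
qed (use assms(1) in auto)

lemma sum_if_le_atLeastAtMost:
  fixes g :: "nat \<Rightarrow> 'a::comm_monoid_add"
  assumes "k \<le> n"
  shows "(\<Sum>i=1..n. if i \<le> k then g i else 0) = (\<Sum>i=1..k. g i)"
proof -
  have "(\<Sum>i=1..n. if i \<le> k then g i else 0) = (\<Sum>i=1..n. if i \<in> {..k} then g i else 0)"
    by simp
  also have "\<dots> = sum g ({1..n} \<inter> {..k})"
    by (simp only: sum.inter_restrict finite_atLeastAtMost)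
  also have "{1..n} \<inter> {..k} = {1..k}" using assms by auto
  finally show ?thesis .
qed

lemma fobj_xvec:
  assumes "k \<le> n"
  shows "fobj n c (xvec u k) = (1/2) * (Usum u k)\<^sup>2 - (\<Sum>i=1..k. c i * u i)"
proof -
  have "(\<Sum>i=1..n. c i * xvec u k i) = (\<Sum>i=1..n. if i \<le> k then c i * u i else 0)"
    by (rule sum.cong) (auto simp: xvec_def)
  then show ?thesis
    using sum_if_le_atLeastAtMost[OF assms, of u] sum_if_le_atLeastAtMost[OF assms, of "\<lambda>i. c i * u i"]
    by (simp add: fobj_def Usum_def xvec_def)
qed

lemma fobj_xvec_Suc:
  assumes "Suc k \<le> n"
  shows "fobj n c (xvec u (Suc k)) = fobj n c (xvec u k) + u (Suc k) * Gval c u (Suc k)"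
proof -
  have "Usum u (Suc k) = Usum u k + u (Suc k)" by (simp add: Usum_def)
  moreover have "(\<Sum>i=1..Suc k. c i * u i) = (\<Sum>i=1..k. c i * u i) + c (Suc k) * u (Suc k)"
    by simp
  ultimately show ?thesis
    unfolding fobj_xvec[OF assms] fobj_xvec[OF Suc_leD[OF assms]] Gval_def diff_Suc_1
    by (simp add: power2_eq_square algebra_simps)
qed

lemma Gval_Suc:
  assumes "1 \<le> k"
  shows "Gval c u (Suc k) = Gval c u k + (u k + u (Suc k)) / 2 + (c k - c (Suc k))"
proof -
  have "Usum u (Suc k) = Usum u k + u (Suc k)" by (simp add: Usum_def)
  moreover have "Usum u k = Usum u (k - 1) + u k"
    using assms by (cases k) (simp_all add: Usum_def)
  ultimately show ?thesis unfolding Gval_def diff_Suc_1 by (simp add: field_simps)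
qed

lemma Gval_mono:
  assumes "1 \<le> j" "j \<le> k"
    and "\<And>m. j \<le> m \<Longrightarrow> m < k \<Longrightarrow> c (Suc m) \<le> c m"
    and "\<And>m. j \<le> m \<Longrightarrow> m \<le> k \<Longrightarrow> 0 \<le> u m"
  shows "Gval c u j \<le> Gval c u k"
  using assms(2)
proof (rule mono_steps_le)
  fix m assume "j \<le> m" "m < k"
  then have "c (Suc m) \<le> c m" "0 \<le> u m" "0 \<le> u (Suc m)"
    using assms(3,4) by auto
  then show "Gval c u m \<le> Gval c u (Suc m)"
    using \<open>1 \<le> j\<close> \<open>j \<le> m\<close> by (simp add: Gval_Suc)
qed

lemma fobj_xvec_Suc_le:
  assumes "Suc k \<le> n" "0 \<le> u (Suc k)" "Gval c u (Suc k) \<le> 0"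
  shows "fobj n c (xvec u (Suc k)) \<le> fobj n c (xvec u k)"
  using assms by (simp add: fobj_xvec_Suc mult_nonneg_nonpos)

lemma fobj_xvec_le_Suc:
  assumes "Suc k \<le> n" "0 \<le> u (Suc k)" "0 \<le> Gval c u (Suc k)"
  shows "fobj n c (xvec u k) \<le> fobj n c (xvec u (Suc k))"
  using assms by (simp add: fobj_xvec_Suc)

theorem lemma1:
  fixes n :: nat and c u :: "nat \<Rightarrow> real"
  assumes "n \<ge> 1"
    and "\<And>i j. 1 \<le> i \<Longrightarrow> i \<le> j \<Longrightarrow> j \<le> n \<Longrightarrow> c j \<le> c i"
    and "c n \<ge> 0"
    and "\<And>i. 1 \<le> i \<Longrightarrow> i \<le> n \<Longrightarrow> u i > 0"
  shows "(\<forall>nb. nb \<in> {1..n} \<and> Gval c u nb \<ge> 0 \<and> (\<forall>k\<in>{1..<nb}. Gval c u k < 0)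
            \<longrightarrow> Min ((\<lambda>i. fobj n c (xvec u i)) ` {0..n}) = fobj n c (xvec u (nb - 1)))
       \<and> ((\<forall>k\<in>{1..n}. Gval c u k < 0)
            \<longrightarrow> Min ((\<lambda>i. fobj n c (xvec u i)) ` {0..n}) = fobj n c (xvec u n))"
proof -
  let ?F = "\<lambda>i. fobj n c (xvec u i)"
  have "Min (?F ` {0..n}) = ?F (nb - 1)"
    if nb: "nb \<in> {1..n}" "Gval c u nb \<ge> 0" "\<forall>k\<in>{1..<nb}. Gval c u k < 0" for nb
  proof (rule Min_image_valley)
    show "?F (Suc m) \<le> ?F m" if "m < nb - 1" for m
    proof -
      have m: "Suc m \<in> {1..<nb}" "Suc m \<le> n" using that nb(1) by auto
      then have "Gval c u (Suc m) < 0" using nb(3) by blast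
      with m(2) show ?thesis using assms(4)[of "Suc m"] by (intro fobj_xvec_Suc_le) auto
    qed
    show "?F m \<le> ?F (Suc m)" if "nb - 1 \<le> m" "m < n" for m
    proof -
      have "Gval c u nb \<le> Gval c u (Suc m)"
        using that nb(1) assms(2,4) by (intro Gval_mono) (auto intro: less_imp_le)
      then show ?thesis
        using that nb(2) assms(4)[of "Suc m"] by (intro fobj_xvec_le_Suc) auto
    qed
  qed (use nb in auto)
  moreover have "Min (?F ` {0..n}) = ?F n" if G: "\<forall>k\<in>{1..n}. Gval c u k < 0"
  proof (rule Min_image_valley)
    show "?F (Suc m) \<le> ?F m" if "m < n" for m
    proof -
      have "Gval c u (Suc m) < 0" using that G by simp
      then show ?thesis using that assms(4)[of "Suc m"] by (intro fobj_xvec_Suc_le) auto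
    qed
  qed auto
  ultimately show ?thesis by blast
qed

end
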